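(* Let $\mathfrak{g}$ be a $6$-dimensional real Lie algebra with a coherent splitting $\mathfrak{g}^*=V_1\oplus V_2$ such that $h^{0,4}=0$ and $h^{0,3}=0$. Then $\mathfrak{g}$ has no half-flat structure.
   Context: Let $d\colon\Lambda^k\mathfrak{g}^*\to\Lambda^{k+1}\mathfrak{g}^*$ be the Chevalley–Eilenberg differential ($d\alpha(X,Y)=-\alpha([X,Y])$ on $1$-forms, extended as a derivation). An $\mathrm{SU}(3)$-structure on a $6$-dimensional Lie algebra $\mathfrak{g}$ is a pair $(\omega,\psi^+)\in\Lambda^2\mathfrak{g}^*\times\Lambda^3\mathfrak{g}^*$ such that for some basis $\eta^1,\dots,\eta^6$ of $\mathfrak{g}^*$ and some $3$-form $\psi^-$ one has $\omega=\eta^{12}+\eta^{34}+\eta^{56}$ and $\psi^++i\psi^-=(\eta^1+i\eta^2)\wedge(\eta^3+i\eta^4)\wedge(\eta^5+i\eta^6)$. It is half-flat if $d\omega\wedge\omega=0$ and $d\psi^+=0$. A coherent splitting of $\mathfrak{g}$ is a decomposition $\mathfrak{g}^*=V_1\oplus V_2$ into vector subspaces with $\dim V_1=2$ such that, setting $\Lambda^{p,q}=\Lambda^pV_1\otimes\Lambda^qV_2\subset\Lambda^{p+q}\mathfrak{g}^*$, one has $d(\Lambda^{p,q})\subset\Lambda^{p+1,q}+\Lambda^{p+2,q-1}$ for all $p,q$. For such a splitting let $F^k_p=\bigoplus_{p'\ge p}\Lambda^{p',k-p'}$, let $Z^k$ be the space of closed $k$-forms, $H^k$ the $k$-th cohomology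 of $(\Lambda^*\mathfrak{g}^*,d)$, and $H^k_p\subset H^k$ the image of $Z^k\cap F^k_p$. Define $H^{p,q}=H^{p+q}_p/H^{p+q}_{p+1}$ and $h^{p,q}=\dim H^{p,q}$. *)

theory Defs
  imports "HOL-Analysis.Analysis" "HOL-Library.Numeral_Type"
begin

text \<open>Fix a basis e_0,...,e_5 of the 6-dimensional real Lie algebra g, indexed by the
  type 6, with dual basis e^0,...,e^5 of g*. A (not necessarily homogeneous) element of
  the exterior algebra of g* is stored by its coefficients on the monomials
  e^I = e^(i_1) wedge ... wedge e^(i_k), where I = {i_1 < ... < i_k}.\<close>

type_synonym form = "real ^ (6 set)"

definition eform :: "6 set \<Rightarrow> form" where
  "eform I = axis I 1"

definition one_form :: form where
  "one_form = eform {}"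

definition forms_deg :: "nat \<Rightarrow> form set" where
  "forms_deg k = {\<alpha>. \<forall>I. card I \<noteq> k \<longrightarrow> \<alpha> $ I = 0}"

definition inv_count :: "6 set \<Rightarrow> 6 set \<Rightarrow> nat" where
  "inv_count I J = card {(i, j). i \<in> I \<and> j \<in> J \<and> j < i}"

definition wedge :: "form \<Rightarrow> form \<Rightarrow> form" where
  "wedge \<alpha> \<beta> = (\<chi> K. \<Sum>I\<in>Pow K. (-1) ^ inv_count I (K - I) * (\<alpha> $ I) * (\<beta> $ (K - I)))"

definition wedgel :: "form list \<Rightarrow> form" where
  "wedgel xs = foldr wedge xs one_form"

text \<open>Lie algebra given by structure constants: [e_i, e_j] = sum_k c i j k e_k.\<close>
definition lie_algebra :: "(6 \<Rightarrow> 6 \<Rightarrow> 6 \<Rightarrow> real) \<Rightarrow> bool" where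
  "lie_algebra c \<longleftrightarrow>
     (\<forall>i j k. c i j k = - c j i k) \<and>
     (\<forall>i j k m. (\<Sum>l\<in>UNIV. c i j l * c l k m + c j k l * c l i m + c k i l * c l j m) = 0)"

text \<open>d e^m, given by d e^m (X,Y) = - e^m([X,Y]).\<close>
definition d_basis1 :: "(6 \<Rightarrow> 6 \<Rightarrow> 6 \<Rightarrow> real) \<Rightarrow> 6 \<Rightarrow> form" where
  "d_basis1 c m = (\<chi> K. if card K = 2 then - c (Min K) (Max K) m else 0)"

text \<open>d on monomials, extending d as a (graded) derivation; d vanishes on 0-forms.\<close>
definition d_mono :: "(6 \<Rightarrow> 6 \<Rightarrow> 6 \<Rightarrow> real) \<Rightarrow> 6 set \<Rightarrow> form" where
  "d_mono c I = (let L = sorted_list_of_set I in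
     \<Sum>a<length L. ((-1) ^ a) *\<^sub>R
        wedgel (map (\<lambda>i. eform {i}) (take a L) @ [d_basis1 c (L ! a)]
                @ map (\<lambda>i. eform {i}) (drop (Suc a) L)))"

definition CE_d :: "(6 \<Rightarrow> 6 \<Rightarrow> 6 \<Rightarrow> real) \<Rightarrow> form \<Rightarrow> form" where
  "CE_d c \<alpha> = (\<Sum>I\<in>UNIV. (\<alpha> $ I) *\<^sub>R d_mono c I)"

text \<open>Lambda^{p,q} = Lambda^p V1 tensor Lambda^q V2, as a subspace of the (p+q)-forms.\<close>
definition Lam :: "form set \<Rightarrow> form set \<Rightarrow> nat \<Rightarrow> nat \<Rightarrow> form set" where
  "Lam V1 V2 p q = span {wedgel (vs @ ws) | vs ws.
      length vs = p \<and> set vs \<subseteq> V1 \<and> length ws = q \<and> set ws \<subseteq> V2}"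

definition coherent_splitting :: "(6 \<Rightarrow> 6 \<Rightarrow> 6 \<Rightarrow> real) \<Rightarrow> form set \<Rightarrow> form set \<Rightarrow> bool" where
  "coherent_splitting c V1 V2 \<longleftrightarrow>
     subspace V1 \<and> subspace V2 \<and> V1 \<subseteq> forms_deg 1 \<and> V2 \<subseteq> forms_deg 1 \<and>
     V1 \<inter> V2 = {0} \<and> {x + y | x y. x \<in> V1 \<and> y \<in> V2} = forms_deg 1 \<and>
     dim V1 = 2 \<and>
     (\<forall>p q. CE_d c ` Lam V1 V2 p q \<subseteq>
        {x + y | x y. x \<in> Lam V1 V2 (Suc p) q \<and>
                      y \<in> (if q = 0 then {0} else Lam V1 V2 (p + 2) (q - 1))})"

definition Filt :: "form set \<Rightarrow> form set \<Rightarrow> nat \<Rightarrow> nat \<Rightarrow> form set" where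
  "Filt V1 V2 k p = span (\<Union>p'\<in>{p..k}. Lam V1 V2 p' (k - p'))"

definition closed_forms :: "(6 \<Rightarrow> 6 \<Rightarrow> 6 \<Rightarrow> real) \<Rightarrow> nat \<Rightarrow> form set" where
  "closed_forms c k = {\<alpha> \<in> forms_deg k. CE_d c \<alpha> = 0}"

definition exact_forms :: "(6 \<Rightarrow> 6 \<Rightarrow> 6 \<Rightarrow> real) \<Rightarrow> nat \<Rightarrow> form set" where
  "exact_forms c k = (if k = 0 then {0} else CE_d c ` forms_deg (k - 1))"

text \<open>Preimage in Z^k of H^k_p: (Z^k \<inter> F^k_p) + B^k, so that H^k_p = this / B^k.\<close>
definition Hpre :: "(6 \<Rightarrow> 6 \<Rightarrow> 6 \<Rightarrow> real) \<Rightarrow> form set \<Rightarrow> form set \<Rightarrow> nat \<Rightarrow> nat \<Rightarrow> form set" where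
  "Hpre c V1 V2 k p = {z + b | z b. z \<in> closed_forms c k \<inter> Filt V1 V2 k p \<and> b \<in> exact_forms c k}"

text \<open>h^{p,q} = dim H^{p+q}_p - dim H^{p+q}_{p+1}
  = dim(Hpre_p / B) - dim(Hpre_{p+1} / B) = dim Hpre_p - dim Hpre_{p+1}.\<close>
definition hdim :: "(6 \<Rightarrow> 6 \<Rightarrow> 6 \<Rightarrow> real) \<Rightarrow> form set \<Rightarrow> form set \<Rightarrow> nat \<Rightarrow> nat \<Rightarrow> nat" where
  "hdim c V1 V2 p q = dim (Hpre c V1 V2 (p + q) p) - dim (Hpre c V1 V2 (p + q) (Suc p))"

text \<open>SU(3)-structure: psi+ is the real part of
  (eta1 + i eta2) wedge (eta3 + i eta4) wedge (eta5 + i eta6).\<close>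
definition SU3_structure :: "form \<Rightarrow> form \<Rightarrow> bool" where
  "SU3_structure \<omega> \<psi> \<longleftrightarrow> (\<exists>\<eta> :: nat \<Rightarrow> form.
     inj_on \<eta> {1..6} \<and> \<eta> ` {1..6} \<subseteq> forms_deg 1 \<and>
     independent (\<eta> ` {1..6}) \<and> span (\<eta> ` {1..6}) = forms_deg 1 \<and>
     \<omega> = wedge (\<eta> 1) (\<eta> 2) + wedge (\<eta> 3) (\<eta> 4) + wedge (\<eta> 5) (\<eta> 6) \<and>
     \<psi> = wedgel [\<eta> 1, \<eta> 3, \<eta> 5] - wedgel [\<eta> 1, \<eta> 4, \<eta> 6]
         - wedgel [\<eta> 2, \<eta> 3, \<eta> 6] - wedgel [\<eta> 2, \<eta> 4, \<eta> 5])"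

definition half_flat :: "(6 \<Rightarrow> 6 \<Rightarrow> 6 \<Rightarrow> real) \<Rightarrow> form \<Rightarrow> form \<Rightarrow> bool" where
  "half_flat c \<omega> \<psi> \<longleftrightarrow> SU3_structure \<omega> \<psi> \<and>
     wedge (CE_d c \<omega>) \<omega> = 0 \<and> CE_d c \<psi> = 0"

end

theory Submission
  imports Defs
begin

text \<open>Coherence puts every exact form into \<open>F\<^sub>1\<close>, so \<open>h\<^sup>0\<^sup>,\<^sup>3 = h\<^sup>0\<^sup>,\<^sup>4 = 0\<close> forces
  every closed 3- and 4-form into \<open>F\<^sub>1\<close>, where it is annihilated by the generator \<open>a \<wedge> b\<close>
  of \<open>\<Lambda>\<^sup>2V\<^sub>1\<close>. A half-flat structure provides two such closed forms, \<open>\<psi>\<^sup>+\<close> and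
  \<open>\<omega>\<^sup>2\<close> (as \<open>d(\<omega>\<^sup>2) = 2 d\<omega> \<wedge> \<omega>\<close>). But a decomposable 2-form annihilating both
  \<open>\<psi>\<^sup>+\<close> and \<open>\<omega>\<^sup>2\<close> vanishes, so \<open>a\<close> and \<open>b\<close> would be parallel, contradicting
  \<open>dim V\<^sub>1 = 2\<close>.\<close>

section \<open>The exterior algebra\<close>

lemma eform_nth: "eform I $ J = (if J = I then 1 else 0)"
  by (simp add: eform_def axis_def)

lemma wedge_nth:
  "wedge a b $ K = (\<Sum>I\<in>Pow K. (-1) ^ inv_count I (K - I) * (a $ I) * (b $ (K - I)))"
  by (simp add: wedge_def)

lemma wedge_eform:
  "wedge (eform I) (eform J) =
     (if I \<inter> J = {} then (-1) ^ inv_count I J else 0) *\<^sub>R eform (I \<union> J)"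
proof (rule vec_eq_iff[THEN iffD2, rule_format])
  fix K
  have "wedge (eform I) (eform J) $ K =
      (\<Sum>I'\<in>Pow K. if I' = I then (-1) ^ inv_count I (K - I) * (eform J $ (K - I)) else 0)"
    unfolding wedge_nth by (rule sum.cong) (auto simp: eform_nth)
  also have "\<dots> = (if I \<subseteq> K then (-1) ^ inv_count I (K - I) * (eform J $ (K - I)) else 0)"
    by (simp add: sum.delta)
  also have "\<dots> = ((if I \<inter> J = {} then (-1) ^ inv_count I J else 0) *\<^sub>R eform (I \<union> J)) $ K"
    by (auto simp: eform_nth)
  finally show "wedge (eform I) (eform J) $ K =
      ((if I \<inter> J = {} then (-1) ^ inv_count I J else 0) *\<^sub>R eform (I \<union> J)) $ K" .
qed

lemma linear_wedge_left: "linear (\<lambda>x. wedge x y)"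
  by (rule linearI) (simp_all add: vec_eq_iff wedge_nth sum.distrib sum_distrib_left algebra_simps)

lemma linear_wedge_right: "linear (wedge x)"
  by (rule linearI) (simp_all add: vec_eq_iff wedge_nth sum.distrib sum_distrib_left algebra_simps)

lemma wedge_zero [simp]: "wedge 0 x = 0" "wedge x 0 = 0"
  using linear_0[OF linear_wedge_left] linear_0[OF linear_wedge_right] by auto

lemma wedge_add: "wedge (x + y) z = wedge x z + wedge y z" "wedge z (x + y) = wedge z x + wedge z y"
  using linear_add[OF linear_wedge_left] linear_add[OF linear_wedge_right] by auto

lemma wedge_diff: "wedge (x - y) z = wedge x z - wedge y z" "wedge z (x - y) = wedge z x - wedge z y"
  using linear_diff[OF linear_wedge_left] linear_diff[OF linear_wedge_right] by auto

lemma wedge_minus [simp]: "wedge (- x) z = - wedge x z" "wedge z (- x) = - wedge z x"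
  using linear_neg[OF linear_wedge_left] linear_neg[OF linear_wedge_right] by auto

lemma wedge_scaleR [simp]:
  "wedge (r *\<^sub>R x) z = r *\<^sub>R wedge x z" "wedge z (r *\<^sub>R x) = r *\<^sub>R wedge z x"
  using linear_cmul[OF linear_wedge_left] linear_cmul[OF linear_wedge_right] by auto

lemma wedge_sum:
  "wedge (sum f A) z = (\<Sum>a\<in>A. wedge (f a) z)" "wedge z (sum f A) = (\<Sum>a\<in>A. wedge z (f a))"
  using linear_sum[OF linear_wedge_left] linear_sum[OF linear_wedge_right] by auto

lemma form_eq_sum_eform: "x = (\<Sum>I\<in>UNIV. x $ I *\<^sub>R eform I)"
  using basis_expansion[of x] by (simp add: eform_def scalar_mult_eq_scaleR)

lemma subspace_forms_deg: "subspace (forms_deg k)"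
  unfolding subspace_def by (auto simp: forms_deg_def)

lemma eform_deg: "eform I \<in> forms_deg (card I)"
  by (simp add: forms_deg_def eform_nth)

lemma eform_singleton_deg: "eform {i} \<in> forms_deg 1"
  using eform_deg[of "{i}"] by simp

lemma form_eq_sum_eform_deg:
  assumes "x \<in> forms_deg k"
  shows "x = (\<Sum>I\<in>{I. card I = k}. x $ I *\<^sub>R eform I)"
proof -
  have "x = (\<Sum>I\<in>UNIV. x $ I *\<^sub>R eform I)" by (rule form_eq_sum_eform)
  also have "\<dots> = (\<Sum>I\<in>{I. card I = k}. x $ I *\<^sub>R eform I)"
    using assms by (intro sum.mono_neutral_right) (auto simp: forms_deg_def)
  finally show ?thesis .
qed

lemma linear_eq_on_eform_deg:
  assumes "linear f" "linear g" "\<And>I. card I = k \<Longrightarrow> f (eform I) = g (eform I)" "x \<in> forms_deg k"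
  shows "f x = g x"
proof -
  have "f x = f (\<Sum>I\<in>{I. card I = k}. x $ I *\<^sub>R eform I)"
    using form_eq_sum_eform_deg[OF assms(4)] by simp
  also have "\<dots> = (\<Sum>I\<in>{I. card I = k}. x $ I *\<^sub>R g (eform I))"
    using assms(1,3) by (simp add: linear_sum linear_cmul)
  also have "\<dots> = g (\<Sum>I\<in>{I. card I = k}. x $ I *\<^sub>R eform I)"
    using assms(2) by (simp add: linear_sum linear_cmul)
  finally show ?thesis using form_eq_sum_eform_deg[OF assms(4)] by simp
qed

lemma linear_eq_on_eform:
  assumes "linear f" "linear g" "\<And>I. f (eform I) = g (eform I)"
  shows "f x = g x"
proof -
  have "f x = f (\<Sum>I\<in>UNIV. x $ I *\<^sub>R eform I)" using form_eq_sum_eform[of x] by simp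
  also have "\<dots> = (\<Sum>I\<in>UNIV. x $ I *\<^sub>R g (eform I))"
    using assms(1,3) by (simp add: linear_sum linear_cmul)
  also have "\<dots> = g (\<Sum>I\<in>UNIV. x $ I *\<^sub>R eform I)"
    using assms(2) by (simp add: linear_sum linear_cmul)
  finally show ?thesis using form_eq_sum_eform[of x] by simp
qed

lemma inv_count_Un_left:
  assumes "I \<inter> J = {}" shows "inv_count (I \<union> J) K = inv_count I K + inv_count J K"
proof -
  have "{(i, j). i \<in> I \<union> J \<and> j \<in> K \<and> j < i} =
      {(i, j). i \<in> I \<and> j \<in> K \<and> j < i} \<union> {(i, j). i \<in> J \<and> j \<in> K \<and> j < i}"
    by auto
  moreover have "{(i, j). i \<in> I \<and> j \<in> K \<and> j < i} \<inter> {(i, j). i \<in> J \<and> j \<in> K \<and> j < i} = {}"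
    using assms by auto
  ultimately show ?thesis unfolding inv_count_def by (simp add: card_Un_disjoint)
qed

lemma inv_count_Un_right:
  assumes "J \<inter> K = {}" shows "inv_count I (J \<union> K) = inv_count I J + inv_count I K"
proof -
  have "{(i, j). i \<in> I \<and> j \<in> J \<union> K \<and> j < i} =
      {(i, j). i \<in> I \<and> j \<in> J \<and> j < i} \<union> {(i, j). i \<in> I \<and> j \<in> K \<and> j < i}"
    by auto
  moreover have "{(i, j). i \<in> I \<and> j \<in> J \<and> j < i} \<inter> {(i, j). i \<in> I \<and> j \<in> K \<and> j < i} = {}"
    using assms by auto
  ultimately show ?thesis unfolding inv_count_def by (simp add: card_Un_disjoint)
qed

lemma inv_count_swap:
  assumes "I \<inter> J = {}" shows "inv_count I J + inv_count J I = card I * card J"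
proof -
  have flip: "card {(i, j). i \<in> J \<and> j \<in> I \<and> j < i} = card {(i, j). i \<in> I \<and> j \<in> J \<and> i < j}"
    by (rule bij_betw_same_card[of "\<lambda>(a, b). (b, a)"]) (auto simp: bij_betw_def inj_on_def image_def)
  have "{(i, j). i \<in> I \<and> j \<in> J \<and> j < i} \<union> {(i, j). i \<in> I \<and> j \<in> J \<and> i < j} = I \<times> J"
    using assms by (auto simp: not_less_iff_gr_or_eq)
  moreover have "{(i, j). i \<in> I \<and> j \<in> J \<and> j < i} \<inter> {(i, j). i \<in> I \<and> j \<in> J \<and> i < j} = {}"
    by auto
  ultimately have "card (I \<times> J) =
      card {(i, j). i \<in> I \<and> j \<in> J \<and> j < i} + card {(i, j). i \<in> I \<and> j \<in> J \<and> i < j}"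
    by (metis (no_types, lifting) card_Un_disjoint finite)
  then show ?thesis unfolding inv_count_def flip by (simp add: card_cartesian_product)
qed

lemma wedge_assoc_eform:
  "wedge (wedge (eform I) (eform J)) (eform K) = wedge (eform I) (wedge (eform J) (eform K))"
proof (cases "I \<inter> J = {} \<and> I \<inter> K = {} \<and> J \<inter> K = {}")
  case True
  then have "inv_count I J + inv_count (I \<union> J) K = inv_count J K + inv_count I (J \<union> K)"
    by (simp add: inv_count_Un_left inv_count_Un_right)
  then have "(-1::real) ^ inv_count I J * (-1) ^ inv_count (I \<union> J) K =
      (-1) ^ inv_count J K * (-1) ^ inv_count I (J \<union> K)"
    by (metis power_add)
  moreover have "(I \<union> J) \<inter> K = {}" "I \<inter> (J \<union> K) = {}" using True by auto
  ultimately show ?thesis using True by (simp add: wedge_eform Un_assoc)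
next
  case False
  then consider "I \<inter> J \<noteq> {}" | "I \<inter> J = {}" "J \<inter> K \<noteq> {}"
    | "I \<inter> J = {}" "J \<inter> K = {}" "I \<inter> K \<noteq> {}"
    by blast
  then show ?thesis
  proof cases
    case 1
    then have "I \<inter> (J \<union> K) \<noteq> {}" by auto
    with 1 show ?thesis by (simp add: wedge_eform)
  next
    case 2
    then have "(I \<union> J) \<inter> K \<noteq> {}" by auto
    with 2 show ?thesis by (simp add: wedge_eform)
  next
    case 3
    then have "(I \<union> J) \<inter> K \<noteq> {}" "I \<inter> (J \<union> K) \<noteq> {}" by auto
    with 3 show ?thesis by (simp add: wedge_eform)
  qed
qed

lemma linear_compose_fun: "linear f \<Longrightarrow> linear g \<Longrightarrow> linear (\<lambda>x. f (g x))"
  using linear_compose[of g f] by (simp add: o_def)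

lemma wedge_assoc: "wedge (wedge x y) z = wedge x (wedge y z)"
proof -
  have eforms: "wedge (wedge (eform I) (eform J)) z = wedge (eform I) (wedge (eform J) z)" for I J
    by (rule linear_eq_on_eform[where f = "\<lambda>z. wedge (wedge (eform I) (eform J)) z"
          and g = "\<lambda>z. wedge (eform I) (wedge (eform J) z)"])
      (auto intro: linear_compose_fun linear_wedge_right wedge_assoc_eform)
  have eform_left: "wedge (wedge (eform I) y) z = wedge (eform I) (wedge y z)" for I
    by (rule linear_eq_on_eform[where f = "\<lambda>y. wedge (wedge (eform I) y) z"
          and g = "\<lambda>y. wedge (eform I) (wedge y z)"])
      (auto intro: linear_compose_fun linear_wedge_right linear_wedge_left eforms)
  show ?thesis
    by (rule linear_eq_on_eform[where f = "\<lambda>x. wedge (wedge x y) z"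
          and g = "\<lambda>x. wedge x (wedge y z)"])
      (auto intro: linear_compose_fun linear_wedge_right linear_wedge_left eform_left)
qed

lemma wedge_one_form_left [simp]: "wedge one_form x = x"
proof -
  have "wedge one_form (eform J) = id (eform J)" for J by (simp add: one_form_def wedge_eform inv_count_def)
  then show ?thesis
    using linear_eq_on_eform[of "wedge one_form" id x] linear_wedge_right by (simp add: linear_id)
qed

lemma wedge_one_form_right [simp]: "wedge x one_form = x"
proof -
  have "wedge (eform J) one_form = id (eform J)" for J by (simp add: one_form_def wedge_eform inv_count_def)
  then show ?thesis
    using linear_eq_on_eform[of "\<lambda>x. wedge x one_form" id x] linear_wedge_left by (simp add: linear_id)
qed

lemma wedge_eform_commute:
  "wedge (eform I) (eform J) = (-1) ^ (card I * card J) *\<^sub>R wedge (eform J) (eform I)"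
proof (cases "I \<inter> J = {}")
  case True
  have "(-1::real) ^ (card I * card J) * (-1) ^ inv_count J I =
      (-1) ^ inv_count I J * ((-1) ^ inv_count J I * (-1) ^ inv_count J I)"
    using inv_count_swap[OF True] by (metis power_add mult.commute mult.assoc)
  also have "(-1::real) ^ inv_count J I * (-1) ^ inv_count J I = 1"
    by (metis power_add power_minus1_even mult_2)
  finally show ?thesis using True by (simp add: wedge_eform Int_commute Un_commute)
qed (simp add: wedge_eform Int_commute)

lemma wedge_deg:
  assumes "x \<in> forms_deg k" "y \<in> forms_deg l"
  shows "wedge x y \<in> forms_deg (k + l)"
  unfolding forms_deg_def
proof (intro CollectI allI impI)
  fix K :: "6 set" assume K: "card K \<noteq> k + l"
  have "(-1) ^ inv_count I (K - I) * (x $ I) * (y $ (K - I)) = 0" if "I \<in> Pow K" for I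
  proof -
    have "card K = card I + card (K - I)" using that
      by (metis PowD card_Diff_subset card_mono finite le_add_diff_inverse)
    then have "card I \<noteq> k \<or> card (K - I) \<noteq> l" using K by auto
    then show ?thesis using assms by (auto simp: forms_deg_def)
  qed
  then show "wedge x y $ K = 0" unfolding wedge_nth by (intro sum.neutral) blast
qed

lemma wedge_commute:
  assumes "x \<in> forms_deg k" "y \<in> forms_deg l"
  shows "wedge x y = (-1) ^ (k * l) *\<^sub>R wedge y x"
proof -
  have eform_left: "wedge (eform I) y = (-1) ^ (k * l) *\<^sub>R wedge y (eform I)" if "card I = k" for I
    by (rule linear_eq_on_eform_deg[where f = "wedge (eform I)"
          and g = "\<lambda>y. (-1) ^ (k * l) *\<^sub>R wedge y (eform I)" and k = l])
      (auto intro!: linear_wedge_right linear_compose_scale_right linear_wedge_left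
        simp: wedge_eform_commute[of I] that assms)
  show ?thesis
    by (rule linear_eq_on_eform_deg[where f = "\<lambda>x. wedge x y"
          and g = "\<lambda>x. (-1) ^ (k * l) *\<^sub>R wedge y x" and k = k])
      (use eform_left assms in \<open>auto intro!: linear_wedge_right linear_compose_scale_right linear_wedge_left\<close>)
qed

lemma wedge_anticommute_deg1:
  "x \<in> forms_deg 1 \<Longrightarrow> y \<in> forms_deg 1 \<Longrightarrow> wedge x y = - wedge y x"
  using wedge_commute[of x 1 y 1] by simp

lemma wedge_self_deg1: "x \<in> forms_deg 1 \<Longrightarrow> wedge x x = 0"
  using wedge_anticommute_deg1[of x x] by (simp add: vec_eq_iff)

lemma wedge_self_deg1': "x \<in> forms_deg 1 \<Longrightarrow> wedge x (wedge x z) = 0"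
  using wedge_self_deg1[of x] by (simp flip: wedge_assoc)

lemma wedge_swap_deg1:
  "x \<in> forms_deg 1 \<Longrightarrow> y \<in> forms_deg 1 \<Longrightarrow> wedge x (wedge y z) = - wedge y (wedge x z)"
  using wedge_anticommute_deg1[of x y] by (simp flip: wedge_assoc)

lemma wedge_swap_deg1_deg2:
  "x \<in> forms_deg 1 \<Longrightarrow> y \<in> forms_deg 2 \<Longrightarrow> wedge x (wedge y z) = wedge y (wedge x z)"
  using wedge_commute[of x 1 y 2] by (simp flip: wedge_assoc)

lemma wedgel_Nil [simp]: "wedgel [] = one_form"
  and wedgel_Cons [simp]: "wedgel (x # xs) = wedge x (wedgel xs)"
  by (simp_all add: wedgel_def)

lemma wedgel_append: "wedgel (xs @ ys) = wedge (wedgel xs) (wedgel ys)"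
  by (induction xs) (simp_all add: wedge_assoc)

lemma one_form_deg: "one_form \<in> forms_deg 0"
  using eform_deg[of "{}"] by (simp add: one_form_def)

lemma wedgel_deg: "set xs \<subseteq> forms_deg 1 \<Longrightarrow> wedgel xs \<in> forms_deg (length xs)"
  by (induction xs) (auto simp: one_form_deg dest: wedge_deg)

lemma wedge_eform_insert:
  assumes "\<forall>j\<in>J. i < j"
  shows "wedge (eform {i}) (eform J) = eform (insert i J)"
proof -
  have "{i} \<inter> J = {}" "inv_count {i} J = 0" using assms unfolding inv_count_def by auto
  then show ?thesis by (simp add: wedge_eform)
qed

lemma wedgel_sorted_eforms:
  "sorted L \<Longrightarrow> distinct L \<Longrightarrow> wedgel (map (\<lambda>i. eform {i}) L) = eform (set L)"
proof (induction L)
  case (Cons i L)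
  then have "\<forall>j\<in>set L. i < j" by (auto simp: order.strict_iff_order)
  with Cons show ?case by (simp add: wedge_eform_insert)
qed (simp add: one_form_def)

lemma eform_eq_wedgel: "eform I = wedgel (map (\<lambda>i. eform {i}) (sorted_list_of_set I))"
  by (simp add: wedgel_sorted_eforms)

section \<open>The Chevalley--Eilenberg differential\<close>

definition grade_involution :: "form \<Rightarrow> form" where
  "grade_involution x = (\<chi> I. (-1) ^ card I * x $ I)"

lemma linear_grade_involution: "linear grade_involution"
  by (rule linearI) (simp_all add: grade_involution_def vec_eq_iff algebra_simps)

lemma grade_involution_eform: "grade_involution (eform I) = (-1) ^ card I *\<^sub>R eform I"
  by (simp add: grade_involution_def vec_eq_iff eform_nth)

lemma grade_involution_one_form: "grade_involution one_form = one_form"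
  using grade_involution_eform[of "{}"] by (simp add: one_form_def)

lemma grade_involution_deg: "x \<in> forms_deg k \<Longrightarrow> grade_involution x = (-1) ^ k *\<^sub>R x"
  by (auto simp: grade_involution_def vec_eq_iff forms_deg_def)

lemma linear_CE_d: "linear (CE_d c)"
  by (rule linearI) (simp_all add: CE_d_def sum.distrib scaleR_add_left scaleR_sum_right)

lemma CE_d_eform: "CE_d c (eform I) = d_mono c I"
proof -
  have "CE_d c (eform I) = (\<Sum>J\<in>UNIV. if J = I then d_mono c I else 0)"
    unfolding CE_d_def by (rule sum.cong) (auto simp: eform_nth)
  then show ?thesis by simp
qed

lemma CE_d_one_form: "CE_d c one_form = 0"
  by (simp add: one_form_def CE_d_eform d_mono_def)

lemma d_basis1_deg: "d_basis1 c i \<in> forms_deg 2"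
  by (simp add: forms_deg_def d_basis1_def)

lemma d_mono_insert_Min:
  assumes "\<forall>j\<in>J. i < j"
  shows "d_mono c (insert i J) = wedge (d_basis1 c i) (eform J) - wedge (eform {i}) (d_mono c J)"
proof -
  define L where "L = sorted_list_of_set J"
  have "i \<notin> J" using assms by auto
  with assms have "sorted_list_of_set (insert i J) = i # L"
    unfolding L_def by (simp add: sorted_list_of_set_insert insort_is_Cons order.strict_implies_order)
  moreover have "wedgel (map (\<lambda>i. eform {i}) L) = eform J"
    unfolding L_def by (simp add: wedgel_sorted_eforms)
  moreover
  let ?T = "\<lambda>L a. ((-1) ^ a) *\<^sub>R wedgel (map (\<lambda>i. eform {i}) (take a L) @ [d_basis1 c (L ! a)]
                @ map (\<lambda>i. eform {i}) (drop (Suc a) L))"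
  have "d_mono c J = (\<Sum>a<length L. ?T L a)" unfolding d_mono_def L_def Let_def by simp
  moreover have "(\<Sum>a<Suc (length L). ?T (i # L) a) = ?T (i # L) 0 + (\<Sum>a<length L. ?T (i # L) (Suc a))"
    by (rule sum.lessThan_Suc_shift)
  moreover have "(\<Sum>a<length L. ?T (i # L) (Suc a)) = (\<Sum>a<length L. - wedge (eform {i}) (?T L a))"
    by (rule sum.cong) (simp_all add: wedgel_append)
  ultimately show ?thesis
    unfolding d_mono_def Let_def by (simp add: wedge_sum sum_negf)
qed

lemma CE_d_wedge_eform_Min:
  assumes "\<forall>j\<in>J. i < j"
  shows "CE_d c (wedge (eform {i}) (eform J)) =
    wedge (d_basis1 c i) (eform J) - wedge (eform {i}) (CE_d c (eform J))"
  using assms by (simp add: wedge_eform_insert CE_d_eform d_mono_insert_Min)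

lemma d_mono_singleton: "d_mono c {i} = d_basis1 c i"
  using d_mono_insert_Min[of "{}" i c] by (simp add: d_mono_def flip: one_form_def)

lemma Min_remove_split:
  fixes J :: "6 set"
  assumes "J \<noteq> {}"
  shows "J = insert (Min J) (J - {Min J})" "\<forall>x\<in>J - {Min J}. Min J < x"
    "card (J - {Min J}) < card J"
proof -
  show "J = insert (Min J) (J - {Min J})" using Min_in[OF finite assms] by auto
  show "\<forall>x\<in>J - {Min J}. Min J < x" using assms by (auto simp: order.strict_iff_order)
  show "card (J - {Min J}) < card J" using assms by (intro card_Diff1_less) auto
qed

text \<open>\<open>d_mono\<close> is defined through the increasing enumeration of its index set, so the
  Leibniz rule for \<open>e\<^sup>i \<wedge> e\<^sup>J\<close> is immediate only when \<open>i < Min J\<close>; the other cases reduce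
  to that one by anticommuting \<open>e\<^sup>i\<close> past \<open>e\<^sup>M\<^sup>i\<^sup>n\<^sup>J\<close>.\<close>

lemma CE_d_wedge_eform_singleton_eform:
  "CE_d c (wedge (eform {i}) (eform J)) =
    wedge (d_basis1 c i) (eform J) - wedge (eform {i}) (CE_d c (eform J))"
proof (induction "card J" arbitrary: J rule: less_induct)
  case less
  let ?D = "CE_d c" and ?e = "\<lambda>i. eform {i}" and ?db = "d_basis1 c"
  note e1 = eform_singleton_deg
  show ?case
  proof (cases "J = {}")
    case True
    then show ?thesis by (simp add: CE_d_eform d_mono_singleton CE_d_one_form flip: one_form_def)
  next
    case False
    define j where "j = Min J"
    define J' where "J' = J - {j}"
    have J: "J = insert j J'" "\<forall>x\<in>J'. j < x" "card J' < card J"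
      using Min_remove_split[OF False] unfolding j_def J'_def by auto
    have eJ: "eform J = wedge (?e j) (eform J')" using J by (simp add: wedge_eform_insert)
    have dJ: "?D (eform J) = wedge (?db j) (eform J') - wedge (?e j) (?D (eform J'))"
      unfolding eJ by (rule CE_d_wedge_eform_Min[OF J(2)])
    consider "i < j" | "i = j" | "j < i" by fastforce
    then show ?thesis
    proof cases
      case 1
      then have "\<forall>x\<in>J. i < x" using J by auto
      then show ?thesis by (rule CE_d_wedge_eform_Min)
    next
      case 2
      have "wedge (?e i) (eform J) = 0" unfolding eJ 2 by (rule wedge_self_deg1'[OF e1])
      moreover have "wedge (?db i) (eform J) - wedge (?e i) (?D (eform J)) = 0"
        unfolding dJ 2 eJ
        by (simp add: CE_d_wedge_eform_Min[OF J(2)] wedge_diff wedge_self_deg1'[OF e1]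
            wedge_swap_deg1_deg2[OF e1 d_basis1_deg])
      ultimately show ?thesis by (simp add: linear_0[OF linear_CE_d])
    next
      case 3
      define \<gamma> where "\<gamma> = wedge (?e i) (eform J')"
      have "\<forall>x\<in>insert i J'. j < x" using J 3 by auto
      then have d\<gamma>: "?D (wedge (?e j) \<gamma>) = wedge (?db j) \<gamma> - wedge (?e j) (?D \<gamma>)"
        unfolding \<gamma>_def wedge_eform[of "{i}"]
        by (simp add: linear_cmul[OF linear_CE_d] CE_d_wedge_eform_Min algebra_simps)
      have IH: "?D \<gamma> = wedge (?db i) (eform J') - wedge (?e i) (?D (eform J'))"
        unfolding \<gamma>_def using less(1)[OF J(3)] .
      have "wedge (?e i) (eform J) = - wedge (?e j) \<gamma>"
        unfolding eJ \<gamma>_def by (rule wedge_swap_deg1[OF e1 e1])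
      then have "?D (wedge (?e i) (eform J)) = - (wedge (?db j) \<gamma> - wedge (?e j) (?D \<gamma>))"
        by (simp add: linear_neg[OF linear_CE_d] d\<gamma>)
      also have "\<dots> = wedge (?db i) (eform J) - wedge (?e i) (?D (eform J))"
        unfolding IH dJ unfolding \<gamma>_def eJ
        by (simp add: wedge_diff wedge_swap_deg1_deg2[OF e1 d_basis1_deg]
            wedge_swap_deg1[OF e1 e1, of j i] algebra_simps)
      finally show ?thesis .
    qed
  qed
qed

lemma CE_d_wedge_eform_singleton:
  "CE_d c (wedge (eform {i}) y) = wedge (d_basis1 c i) y - wedge (eform {i}) (CE_d c y)"
  by (rule linear_eq_on_eform[OF linear_compose_fun[OF linear_CE_d linear_wedge_right]
        linear_compose_sub[OF linear_wedge_right linear_compose_fun[OF linear_wedge_right linear_CE_d]]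
        CE_d_wedge_eform_singleton_eform])

lemma CE_d_wedge:
  "CE_d c (wedge x y) = wedge (CE_d c x) y + wedge (grade_involution x) (CE_d c y)"
proof -
  let ?D = "CE_d c" and ?e = "\<lambda>i. eform {i}" and ?db = "d_basis1 c"
  have "?D (wedge (eform I) y) = wedge (?D (eform I)) y + wedge (grade_involution (eform I)) (?D y)" for I
  proof (induction "card I" arbitrary: I rule: less_induct)
    case less
    show ?case
    proof (cases "I = {}")
      case True
      then show ?thesis by (simp add: CE_d_one_form grade_involution_one_form flip: one_form_def)
    next
      case False
      define i where "i = Min I"
      define I' where "I' = I - {i}"
      have I: "I = insert i I'" "\<forall>x\<in>I'. i < x" "card I' < card I"
        using Min_remove_split[OF False] unfolding i_def I'_def by auto
      have eI: "eform I = wedge (?e i) (eform I')" using I by (simp add: wedge_eform_insert)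
      have "i \<notin> I'" using I(2) by auto
      then have cI: "card I = Suc (card I')" using I(1) by simp
      have dI: "?D (eform I) = wedge (?db i) (eform I') - wedge (?e i) (?D (eform I'))"
        unfolding eI by (rule CE_d_wedge_eform_singleton)
      have "?D (wedge (eform I) y) = ?D (wedge (?e i) (wedge (eform I') y))"
        unfolding eI by (simp add: wedge_assoc)
      also have "\<dots> = wedge (?db i) (wedge (eform I') y) - wedge (?e i) (?D (wedge (eform I') y))"
        by (rule CE_d_wedge_eform_singleton)
      also have "\<dots> = wedge (?db i) (wedge (eform I') y)
          - wedge (?e i) (wedge (?D (eform I')) y + wedge (grade_involution (eform I')) (?D y))"
        using less(1)[OF I(3)] by simp
      also have "\<dots> = wedge (?D (eform I)) y + wedge (grade_involution (eform I)) (?D y)"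
        unfolding dI grade_involution_eform cI unfolding eI
        by (simp add: wedge_diff wedge_add wedge_assoc algebra_simps)
      finally show ?thesis .
    qed
  qed
  then show ?thesis
    by (rule linear_eq_on_eform[OF linear_compose_fun[OF linear_CE_d linear_wedge_left]
          linear_compose_add[OF linear_compose_fun[OF linear_wedge_left linear_CE_d]
            linear_compose_fun[OF linear_wedge_left linear_grade_involution]]])
qed

lemma d_mono_deg: "d_mono c I \<in> forms_deg (Suc (card I))"
proof -
  define L where "L = sorted_list_of_set I"
  have "((-1) ^ a) *\<^sub>R wedgel (map (\<lambda>i. eform {i}) (take a L) @ [d_basis1 c (L ! a)]
      @ map (\<lambda>i. eform {i}) (drop (Suc a) L)) \<in> forms_deg (Suc (card I))" if "a < length L" for a
  proof -
    have singletons: "set (map (\<lambda>i. eform {i}) xs) \<subseteq> forms_deg 1" for xs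
      using eform_singleton_deg by auto
    have "wedgel (map (\<lambda>i. eform {i}) (take a L)) \<in> forms_deg a"
      using wedgel_deg[OF singletons, of "take a L"] that by simp
    moreover have "wedgel (map (\<lambda>i. eform {i}) (drop (Suc a) L)) \<in> forms_deg (length L - Suc a)"
      using wedgel_deg[OF singletons, of "drop (Suc a) L"] by simp
    ultimately have "wedge (wedgel (map (\<lambda>i. eform {i}) (take a L)))
        (wedge (d_basis1 c (L ! a)) (wedgel (map (\<lambda>i. eform {i}) (drop (Suc a) L))))
        \<in> forms_deg (a + (2 + (length L - Suc a)))"
      by (intro wedge_deg d_basis1_deg)
    moreover have "a + (2 + (length L - Suc a)) = Suc (card I)" using that by (simp add: L_def)
    ultimately show ?thesis
      using subspace_scale[OF subspace_forms_deg] by (simp add: wedgel_append)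
  qed
  then show ?thesis
    unfolding d_mono_def Let_def L_def[symmetric]
    by (intro subspace_sum[OF subspace_forms_deg]) auto
qed

lemma CE_d_deg: "x \<in> forms_deg k \<Longrightarrow> CE_d c x \<in> forms_deg (Suc k)"
  unfolding CE_d_def
proof (intro subspace_sum[OF subspace_forms_deg])
  fix I assume "x \<in> forms_deg k"
  then have "card I = k \<or> x $ I = 0" by (auto simp: forms_deg_def)
  then show "x $ I *\<^sub>R d_mono c I \<in> forms_deg (Suc k)"
    using d_mono_deg[of c I] subspace_scale[OF subspace_forms_deg] subspace_0[OF subspace_forms_deg]
    by auto
qed

lemma CE_d_wedge_self_deg2:
  assumes "\<omega> \<in> forms_deg 2"
  shows "CE_d c (wedge \<omega> \<omega>) = 2 *\<^sub>R wedge (CE_d c \<omega>) \<omega>"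
proof -
  have "CE_d c \<omega> \<in> forms_deg 3"
    using CE_d_deg[OF assms] by (simp add: numeral_3_eq_3)
  then have "wedge \<omega> (CE_d c \<omega>) = wedge (CE_d c \<omega>) \<omega>"
    using wedge_commute[OF assms] by simp
  then show ?thesis using assms by (simp add: CE_d_wedge grade_involution_deg scaleR_2)
qed

section \<open>The filtration\<close>

definition spanning_pair :: "form set \<Rightarrow> form set \<Rightarrow> bool" where
  "spanning_pair V1 V2 \<longleftrightarrow> V1 \<subseteq> forms_deg 1 \<and> V2 \<subseteq> forms_deg 1 \<and>
     {x + y | x y. x \<in> V1 \<and> y \<in> V2} = forms_deg 1"

lemma coherent_splitting_spanning_pair:
  "coherent_splitting c V1 V2 \<Longrightarrow> spanning_pair V1 V2"
  by (simp add: coherent_splitting_def spanning_pair_def)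

lemma linear_maps_span_into:
  assumes "linear f" "subspace T" "\<And>z. z \<in> S \<Longrightarrow> f z \<in> T" "z \<in> span S"
  shows "f z \<in> T"
proof -
  have "subspace {z. f z \<in> T}"
    using assms(1,2) unfolding subspace_def by (auto simp: linear_0 linear_add linear_cmul)
  then have "span S \<subseteq> {z. f z \<in> T}" using assms(3) by (intro span_minimal) auto
  then show ?thesis using assms(4) by auto
qed

definition Lam_gens :: "form set \<Rightarrow> form set \<Rightarrow> nat \<Rightarrow> nat \<Rightarrow> form set" where
  "Lam_gens V1 V2 p q = {wedgel (vs @ ws) | vs ws.
      length vs = p \<and> set vs \<subseteq> V1 \<and> length ws = q \<and> set ws \<subseteq> V2}"

lemma Lam_eq_span_Lam_gens: "Lam V1 V2 p q = span (Lam_gens V1 V2 p q)"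
  by (simp add: Lam_def Lam_gens_def)

lemma subspace_Filt: "subspace (Filt V1 V2 k p)"
  by (simp add: Filt_def)

lemma Lam_subset_Filt: "p0 \<le> p \<Longrightarrow> p \<le> k \<Longrightarrow> Lam V1 V2 p (k - p) \<subseteq> Filt V1 V2 k p0"
  unfolding Filt_def by (intro subset_trans[OF _ span_superset]) auto

lemma Lam_gens_subset_Filt:
  "p0 \<le> p \<Longrightarrow> p \<le> k \<Longrightarrow> Lam_gens V1 V2 p (k - p) \<subseteq> Filt V1 V2 k p0"
  using Lam_subset_Filt[of p0 p k V1 V2] span_superset[of "Lam_gens V1 V2 p (k - p)"]
  by (auto simp: Lam_eq_span_Lam_gens)

lemma linear_maps_Lam_into:
  assumes "linear f" "subspace T" "\<And>g. g \<in> Lam_gens V1 V2 p q \<Longrightarrow> f g \<in> T"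
    "l \<in> Lam V1 V2 p q"
  shows "f l \<in> T"
  using linear_maps_span_into[OF assms(1-3)] assms(4) by (simp add: Lam_eq_span_Lam_gens)

lemma linear_maps_Filt_into:
  assumes "linear f" "subspace T"
    "\<And>p l. p0 \<le> p \<Longrightarrow> p \<le> k \<Longrightarrow> l \<in> Lam V1 V2 p (k - p) \<Longrightarrow> f l \<in> T"
    "z \<in> Filt V1 V2 k p0"
  shows "f z \<in> T"
proof -
  have "f l \<in> T" if "l \<in> (\<Union>p\<in>{p0..k}. Lam V1 V2 p (k - p))" for l
    using assms(3) that by auto
  from linear_maps_span_into[OF assms(1,2) this] show ?thesis
    using assms(4) unfolding Filt_def by blast
qed

lemma wedge_Lam_gens_in_Filt0:
  assumes V: "spanning_pair V1 V2" and v: "v \<in> V1" and w: "w \<in> V2"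
    and p: "p \<le> n" and g: "g \<in> Lam_gens V1 V2 p (n - p)"
  shows "wedge (v + w) g \<in> Filt V1 V2 (Suc n) 0"
proof -
  obtain vs ws where gs: "g = wedgel (vs @ ws)" "length vs = p" "set vs \<subseteq> V1"
      "length ws = n - p" "set ws \<subseteq> V2"
    using g unfolding Lam_gens_def by blast
  have "wedge v g = wedgel ((v # vs) @ ws)" using gs by simp
  then have "wedge v g \<in> Lam_gens V1 V2 (Suc p) (Suc n - Suc p)"
    unfolding Lam_gens_def using gs v p by fastforce
  then have v_in: "wedge v g \<in> Filt V1 V2 (Suc n) 0"
    using Lam_gens_subset_Filt[of 0 "Suc p" "Suc n"] p by auto
  have "set vs \<subseteq> forms_deg 1" "w \<in> forms_deg 1" using gs w V by (auto simp: spanning_pair_def)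
  then have "wedge w (wedgel vs) = (-1) ^ p *\<^sub>R wedge (wedgel vs) w"
    using wedge_commute[OF _ wedgel_deg] gs by simp
  then have "wedge w g = (-1) ^ p *\<^sub>R wedgel (vs @ w # ws)"
    using gs by (simp add: wedgel_append flip: wedge_assoc)
  moreover have "wedgel (vs @ w # ws) \<in> Lam_gens V1 V2 p (Suc n - p)"
    unfolding Lam_gens_def using gs w p by fastforce
  then have "wedgel (vs @ w # ws) \<in> Filt V1 V2 (Suc n) 0"
    using Lam_gens_subset_Filt[of 0 p "Suc n"] p by auto
  ultimately have "wedge w g \<in> Filt V1 V2 (Suc n) 0"
    using subspace_scale[OF subspace_Filt] by simp
  then show ?thesis using v_in subspace_add[OF subspace_Filt] by (simp add: wedge_add)
qed

lemma wedge_deg1_Filt0: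
  assumes V: "spanning_pair V1 V2" and u: "u \<in> forms_deg 1" and z: "z \<in> Filt V1 V2 n 0"
  shows "wedge u z \<in> Filt V1 V2 (Suc n) 0"
proof -
  obtain v w where vw: "u = v + w" "v \<in> V1" "w \<in> V2"
    using u V unfolding spanning_pair_def by blast
  show ?thesis
    unfolding vw(1)
    by (rule linear_maps_Filt_into[OF linear_wedge_right subspace_Filt _ z],
        rule linear_maps_Lam_into[OF linear_wedge_right subspace_Filt])
      (use wedge_Lam_gens_in_Filt0[OF V vw(2,3)] in auto)
qed

lemma forms_deg_subset_Filt0:
  assumes V: "spanning_pair V1 V2"
  shows "forms_deg k \<subseteq> Filt V1 V2 k 0"
proof -
  have "wedgel xs \<in> Filt V1 V2 (length xs) 0" if "set xs \<subseteq> forms_deg 1" for xs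
    using that
  proof (induction xs)
    case Nil
    have "wedgel ([] @ []) \<in> Lam_gens V1 V2 0 (0 - 0)"
      unfolding Lam_gens_def by (rule CollectI, rule exI[of _ "[]"], rule exI[of _ "[]"]) simp
    then show ?case using Lam_gens_subset_Filt[of 0 0 0] by auto
  qed (auto intro: wedge_deg1_Filt0[OF V])
  moreover have "set (map (\<lambda>i. eform {i}) (sorted_list_of_set I)) \<subseteq> forms_deg 1" for I
    using eform_singleton_deg by auto
  ultimately have "eform I \<in> Filt V1 V2 (card I) 0" for I
    by (metis eform_eq_wedgel length_map length_sorted_list_of_set)
  then have "(\<Sum>I\<in>{I. card I = k}. x $ I *\<^sub>R eform I) \<in> Filt V1 V2 k 0" for x
    by (intro subspace_sum[OF subspace_Filt] subspace_scale[OF subspace_Filt]) auto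
  then show ?thesis using form_eq_sum_eform_deg by (metis subsetI)
qed

lemma CE_d_Filt0_in_Filt1:
  assumes coh: "coherent_splitting c V1 V2" and x: "x \<in> Filt V1 V2 k 0"
  shows "CE_d c x \<in> Filt V1 V2 (Suc k) 1"
proof (rule linear_maps_Filt_into[OF linear_CE_d subspace_Filt _ x])
  fix p l assume p: "p \<le> k" and l: "l \<in> Lam V1 V2 p (k - p)"
  obtain a b where ab: "CE_d c l = a + b" "a \<in> Lam V1 V2 (Suc p) (k - p)"
      "b \<in> (if k - p = 0 then {0} else Lam V1 V2 (p + 2) (k - p - 1))"
    using coh l unfolding coherent_splitting_def by blast
  have "a \<in> Filt V1 V2 (Suc k) 1"
    using Lam_subset_Filt[of 1 "Suc p" "Suc k" V1 V2] p ab by auto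
  moreover have "b \<in> Filt V1 V2 (Suc k) 1"
  proof (cases "k - p = 0")
    case False
    then have "Suc k - (p + 2) = k - p - 1" by auto
    then show ?thesis using Lam_subset_Filt[of 1 "p + 2" "Suc k" V1 V2] ab False by auto
  qed (use ab subspace_0[OF subspace_Filt] in simp)
  ultimately show "CE_d c l \<in> Filt V1 V2 (Suc k) 1" using ab subspace_add[OF subspace_Filt] by simp
qed

lemma subspace_closed_forms: "subspace (closed_forms c k)"
  unfolding subspace_def closed_forms_def
  using subspace_forms_deg[of k] linear_CE_d
  by (auto simp: subspace_def linear_0 linear_add linear_cmul)

lemma subspace_exact_forms: "subspace (exact_forms c k)"
  unfolding exact_forms_def
  using linear_subspace_image[OF linear_CE_d subspace_forms_deg] by (auto simp: subspace_def)

lemma subspace_Hpre: "subspace (Hpre c V1 V2 k p)"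
  unfolding Hpre_def
  by (rule subspace_sums[OF subspace_inter[OF subspace_closed_forms subspace_Filt] subspace_exact_forms])

lemma exact_forms_subset_Filt1:
  assumes coh: "coherent_splitting c V1 V2" and k: "k \<ge> 1"
  shows "exact_forms c k \<subseteq> Filt V1 V2 k 1"
proof
  fix b assume "b \<in> exact_forms c k"
  then obtain y where y: "y \<in> forms_deg (k - 1)" "b = CE_d c y" using k by (auto simp: exact_forms_def)
  then have "y \<in> Filt V1 V2 (k - 1) 0"
    using forms_deg_subset_Filt0[OF coherent_splitting_spanning_pair[OF coh]] by blast
  from CE_d_Filt0_in_Filt1[OF coh this] show "b \<in> Filt V1 V2 k 1" using y k by simp
qed

text \<open>A vanishing \<open>h\<^sup>0\<^sup>,\<^sup>k\<close> means \<open>H\<^sup>k\<^sub>1 = H\<^sup>k\<^sub>0 = H\<^sup>k\<close>: every closed \<open>k\<close>-form is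
  cohomologous to one in \<open>F\<^sub>1\<close>, and the correcting exact form is in \<open>F\<^sub>1\<close> as well.\<close>

lemma closed_forms_subset_Filt1:
  assumes coh: "coherent_splitting c V1 V2" and h: "hdim c V1 V2 0 k = 0" and k: "k \<ge> 1"
  shows "closed_forms c k \<subseteq> Filt V1 V2 k 1"
proof
  fix z assume z: "z \<in> closed_forms c k"
  have "Filt V1 V2 k 1 \<subseteq> Filt V1 V2 k 0" unfolding Filt_def by (intro span_mono) auto
  then have "Hpre c V1 V2 k 1 \<subseteq> Hpre c V1 V2 k 0" unfolding Hpre_def by blast
  moreover have "dim (Hpre c V1 V2 k 0) \<le> dim (Hpre c V1 V2 k 1)" using h by (simp add: hdim_def)
  ultimately have eq: "Hpre c V1 V2 k 1 = Hpre c V1 V2 k 0"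
    by (rule subspace_dim_equal[OF subspace_Hpre subspace_Hpre])
  have "z \<in> Filt V1 V2 k 0"
    using z forms_deg_subset_Filt0[OF coherent_splitting_spanning_pair[OF coh]]
    by (auto simp: closed_forms_def)
  moreover have "0 \<in> exact_forms c k" using subspace_0[OF subspace_exact_forms] .
  ultimately have "z \<in> Hpre c V1 V2 k 0" unfolding Hpre_def using z by force
  then have "z \<in> Hpre c V1 V2 k 1" using eq by simp
  then obtain a b where "z = a + b" "a \<in> Filt V1 V2 k 1" "b \<in> exact_forms c k"
    unfolding Hpre_def by blast
  then show "z \<in> Filt V1 V2 k 1"
    using exact_forms_subset_Filt1[OF coh k] subspace_add[OF subspace_Filt] by auto
qed

lemma coherent_splitting_obtain_V1_basis:
  assumes "coherent_splitting c V1 V2"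
  obtains a b where "a \<in> V1" "b \<in> V1" "a \<noteq> b" "independent {a, b}" "V1 \<subseteq> span {a, b}"
proof -
  obtain B where B: "B \<subseteq> V1" "independent B" "V1 \<subseteq> span B" "card B = dim V1"
    using basis_exists[of V1] by metis
  then have "card B = 2" using assms by (simp add: coherent_splitting_def)
  then obtain a b where "B = {a, b}" "a \<noteq> b" by (auto simp: card_2_iff)
  then show ?thesis using that B by auto
qed

text \<open>Each generator of \<open>F\<^sub>1\<close> has a factor from \<open>V\<^sub>1 = span {a, b}\<close>.\<close>

lemma wedge_V1_basis_Filt1_eq_0:
  assumes a: "a \<in> forms_deg 1" and b: "b \<in> forms_deg 1" and V1: "V1 \<subseteq> span {a, b}"
    and z: "z \<in> Filt V1 V2 k 1"
  shows "wedge (wedge a b) z = 0"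
proof -
  have "wedge (wedge a b) a = - wedge (wedge a a) b"
    using wedge_anticommute_deg1[OF b a] by (simp add: wedge_assoc)
  then have "wedge (wedge a b) a = 0" using wedge_self_deg1[OF a] by simp
  moreover have "wedge (wedge a b) b = 0" using wedge_self_deg1[OF b] by (simp add: wedge_assoc)
  ultimately have V1_0: "wedge (wedge a b) v = 0" if "v \<in> V1" for v
    using linear_maps_span_into[OF linear_wedge_right subspace_single_0, of "{a, b}" "wedge a b" v]
      that V1 by auto
  have "wedge (wedge a b) g = 0" if p: "1 \<le> p" and g: "g \<in> Lam_gens V1 V2 p q" for g p q
  proof -
    obtain vs ws where gs: "g = wedgel (vs @ ws)" "length vs = p" "set vs \<subseteq> V1"
      using g unfolding Lam_gens_def by blast
    moreover obtain v vs' where "vs = v # vs'" using gs(2) p by (cases vs) auto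
    ultimately have "g = wedge v (wedgel (vs' @ ws))" "v \<in> V1" by auto
    then show ?thesis using V1_0 by (simp flip: wedge_assoc)
  qed
  then have "wedge (wedge a b) l \<in> {0}" if "1 \<le> p" "l \<in> Lam V1 V2 p q" for l p q
    using linear_maps_Lam_into[OF linear_wedge_right subspace_single_0] that by blast
  then have "wedge (wedge a b) z \<in> {0}"
    using linear_maps_Filt_into[OF linear_wedge_right subspace_single_0 _ z] by blast
  then show ?thesis by simp
qed

section \<open>Decomposable 2-forms and the \<open>SU(3)\<close> forms\<close>

definition std_omega :: "(nat \<Rightarrow> form) \<Rightarrow> form" where
  "std_omega \<eta> = wedge (\<eta> 1) (\<eta> 2) + wedge (\<eta> 3) (\<eta> 4) + wedge (\<eta> 5) (\<eta> 6)"

definition std_psi_plus :: "(nat \<Rightarrow> form) \<Rightarrow> form" where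
  "std_psi_plus \<eta> = wedgel [\<eta> 1, \<eta> 3, \<eta> 5] - wedgel [\<eta> 1, \<eta> 4, \<eta> 6]
     - wedgel [\<eta> 2, \<eta> 3, \<eta> 6] - wedgel [\<eta> 2, \<eta> 4, \<eta> 5]"

locale coframe =
  fixes \<eta> :: "nat \<Rightarrow> form"
  assumes inj: "inj_on \<eta> {1..6}"
    and span_eq: "span (\<eta> ` {1..6}) = forms_deg 1"
begin

lemma deg1: "m \<in> {1..6} \<Longrightarrow> \<eta> m \<in> forms_deg 1"
proof -
  assume "m \<in> {1..6}"
  then have "\<eta> m \<in> span (\<eta> ` {1..6})" by (intro span_base) simp
  then show ?thesis unfolding span_eq .
qed

definition eta_monomial :: "nat list \<Rightarrow> form" where
  "eta_monomial l = wedgel (map \<eta> l)"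

lemma eta_monomial_Cons: "eta_monomial (x # l) = wedge (\<eta> x) (eta_monomial l)"
  by (simp add: eta_monomial_def)

lemma wedge_eta_monomial_insort:
  assumes "x \<in> {1..6}" "set l \<subseteq> {1..6}"
  shows "\<exists>s. wedge (\<eta> x) (eta_monomial l) = s *\<^sub>R eta_monomial (insort x l)"
  using assms(2)
proof (induction l)
  case Nil
  then show ?case by (intro exI[of _ 1]) (simp add: eta_monomial_def)
next
  case (Cons y l)
  show ?case
  proof (cases "x \<le> y")
    case True
    then show ?thesis by (intro exI[of _ 1]) (simp add: eta_monomial_Cons)
  next
    case False
    obtain s where s: "wedge (\<eta> x) (eta_monomial l) = s *\<^sub>R eta_monomial (insort x l)" using Cons by auto
    have "wedge (\<eta> x) (eta_monomial (y # l)) = - wedge (\<eta> y) (wedge (\<eta> x) (eta_monomial l))"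
      unfolding eta_monomial_Cons using Cons.prems assms(1) by (intro wedge_swap_deg1 deg1) auto
    also have "\<dots> = (- s) *\<^sub>R eta_monomial (insort x (y # l))" using False s by (simp add: eta_monomial_Cons)
    finally show ?thesis by blast
  qed
qed

lemma eta_monomial_sort: "set l \<subseteq> {1..6} \<Longrightarrow> \<exists>s. eta_monomial l = s *\<^sub>R eta_monomial (sort l)"
proof (induction l)
  case Nil
  then show ?case by (intro exI[of _ 1]) simp
next
  case (Cons x l)
  then obtain s where s: "eta_monomial l = s *\<^sub>R eta_monomial (sort l)" by auto
  obtain s' where "wedge (\<eta> x) (eta_monomial (sort l)) = s' *\<^sub>R eta_monomial (insort x (sort l))"
    using wedge_eta_monomial_insort[of x "sort l"] Cons.prems by auto
  then have "eta_monomial (x # l) = (s * s') *\<^sub>R eta_monomial (sort (x # l))" unfolding eta_monomial_Cons s by simp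
  then show ?case by blast
qed

lemma sorted_not_distinct_obtain_adjacent:
  assumes "sorted l" "\<not> distinct l"
  obtains xs y ys where "l = xs @ y # y # ys"
  using assms
proof (induction l arbitrary: thesis)
  case (Cons a l)
  show ?case
  proof (cases "a \<in> set l")
    case True
    then obtain b l' where l: "l = b # l'" by (cases l) auto
    with Cons.prems True have "a = b" by (auto intro: order.antisym)
    then show ?thesis using l Cons.prems(1)[of "[]"] by auto
  next
    case False
    then show ?thesis using Cons by (metis append_Cons distinct.simps(2) sorted_simps(2))
  qed
qed simp

definition vol :: form where
  "vol = eta_monomial [1, 2, 3, 4, 5, 6]"

lemma eta_monomial_length6_in_span_vol:
  assumes "set l \<subseteq> {1..6}" "length l = 6"
  shows "eta_monomial l \<in> span {vol}"
proof -
  obtain s where s: "eta_monomial l = s *\<^sub>R eta_monomial (sort l)" using eta_monomial_sort[OF assms(1)] by blast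
  have "eta_monomial (sort l) \<in> span {vol}"
  proof (cases "distinct (sort l)")
    case True
    have "card (set (sort l)) = 6" using distinct_card[of l] True assms(2) by simp
    then have "set (sort l) = {1..6}" using assms(1) by (intro card_subset_eq) simp_all
    moreover have "set [1..<7] = {1..6::nat}" by auto
    ultimately have "sort l = [1..<7]"
      by (intro sorted_distinct_set_unique sorted_sort True sorted_upt distinct_upt) simp
    moreover have "[1..<7] = [1, 2, 3, 4, 5, 6::nat]" by (simp add: upt_rec)
    ultimately show ?thesis by (simp add: vol_def span_base)
  next
    case False
    then obtain xs y ys where l: "sort l = xs @ y # y # ys"
      using sorted_not_distinct_obtain_adjacent[OF sorted_sort] by blast
    then have "y \<in> set (sort l)" by simp
    then have "y \<in> {1..6}" using assms(1) by auto
    then have "eta_monomial (sort l) = 0"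
      unfolding l eta_monomial_def by (simp add: wedgel_append wedge_self_deg1'[OF deg1])
    then show ?thesis by (simp add: span_zero)
  qed
  then show ?thesis using s by (simp add: span_mul)
qed

lemma wedgel_in_span_eta_monomials:
  "set ys \<subseteq> forms_deg 1 \<Longrightarrow> wedgel ys \<in> span {eta_monomial l | l. set l \<subseteq> {1..6} \<and> length l = length ys}"
proof (induction ys)
  case Nil
  have "wedgel [] \<in> {eta_monomial l | l. set l \<subseteq> {1..6} \<and> length l = 0}"
    by (auto simp: eta_monomial_def intro!: exI[of _ "[]"])
  then show ?case by (simp add: span_base)
next
  case (Cons y ys)
  let ?G = "{eta_monomial l | l. set l \<subseteq> {1..6} \<and> length l = length ys}"
  let ?G' = "{eta_monomial l | l. set l \<subseteq> {1..6} \<and> length l = Suc (length ys)}"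
  have "wedge (\<eta> m) g \<in> span ?G'" if m: "m \<in> {1..6}" and g: "g \<in> ?G" for m g
  proof -
    obtain l where l: "g = eta_monomial l" "set l \<subseteq> {1..6}" "length l = length ys" using g by blast
    have "wedge (\<eta> m) g = eta_monomial (m # l)" using l by (simp add: eta_monomial_Cons)
    moreover have "eta_monomial (m # l) \<in> ?G'" using l m by fastforce
    ultimately show ?thesis by (simp add: span_base)
  qed
  then have "wedge x (wedgel ys) \<in> span ?G'" if "x \<in> \<eta> ` {1..6}" for x
    using that Cons linear_maps_span_into[OF linear_wedge_right subspace_span, of ?G x ?G' "wedgel ys"]
    by auto
  moreover have "y \<in> span (\<eta> ` {1..6})" unfolding span_eq using Cons.prems by simp
  ultimately have "wedge y (wedgel ys) \<in> span ?G'"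
    by (rule linear_maps_span_into[OF linear_wedge_left subspace_span])
  then show ?case by simp
qed

lemma vol_nonzero: "vol \<noteq> 0"
proof
  assume "vol = 0"
  let ?L = "map (\<lambda>i. eform {i}) (sorted_list_of_set (UNIV :: 6 set))"
  have "set ?L \<subseteq> forms_deg 1" using eform_singleton_deg by auto
  then have "wedgel ?L \<in> span {eta_monomial l | l. set l \<subseteq> {1..6} \<and> length l = 6}"
    using wedgel_in_span_eta_monomials[of ?L] by simp
  also have "\<dots> \<subseteq> span {vol}"
    using eta_monomial_length6_in_span_vol by (intro span_minimal) auto
  finally have "eform UNIV = 0" using \<open>vol = 0\<close> by (simp flip: eform_eq_wedgel)
  then show False by (metis eform_nth zero_index zero_neq_one)
qed

text \<open>As simplification rules, these sort every wedge product of the \<open>\<eta>\<close>'s into increasing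
  order of indices, so that all top-degree terms become multiples of \<open>vol\<close>.\<close>

lemma wedge_eta_swap:
  "x \<in> {1..6} \<Longrightarrow> y \<in> {1..6} \<Longrightarrow> y < x \<Longrightarrow> wedge (\<eta> x) (wedge (\<eta> y) w) = - wedge (\<eta> y) (wedge (\<eta> x) w)"
  "x \<in> {1..6} \<Longrightarrow> y \<in> {1..6} \<Longrightarrow> y < x \<Longrightarrow> wedge (\<eta> x) (\<eta> y) = - wedge (\<eta> y) (\<eta> x)"
  by (intro wedge_swap_deg1 wedge_anticommute_deg1 deg1; simp)+

lemma wedge_eta_self:
  "x \<in> {1..6} \<Longrightarrow> wedge (\<eta> x) (wedge (\<eta> x) w) = 0"
  "x \<in> {1..6} \<Longrightarrow> wedge (\<eta> x) (\<eta> x) = 0"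
  by (intro wedge_self_deg1' wedge_self_deg1 deg1; simp)+

lemma numeral_times_form: "numeral k * (w::form) = numeral k *\<^sub>R w"
  by (simp add: vec_eq_iff)

lemmas eta_normalize = wedge_eta_swap wedge_eta_self numeral_times_form wedge_assoc wedge_add wedge_diff

lemma sum_atLeastAtMost_1_6: "(\<Sum>m\<in>{1..6::nat}. f m) = f 1 + f 2 + f 3 + f 4 + f 5 + f 6"
proof -
  have "{1..6::nat} = {1, 2, 3, 4, 5, 6}" by auto
  then show ?thesis by (simp add: add.assoc)
qed

lemma coords_exist: "x \<in> forms_deg 1 \<Longrightarrow> \<exists>\<alpha>. x = (\<Sum>m\<in>{1..6}. \<alpha> m *\<^sub>R \<eta> m)"
proof -
  assume "x \<in> forms_deg 1"
  then obtain u where "x = (\<Sum>v\<in>\<eta> ` {1..6}. u v *\<^sub>R v)"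
    using span_finite[of "\<eta> ` {1..6}"] span_eq by auto
  also have "\<dots> = (\<Sum>m\<in>{1..6}. u (\<eta> m) *\<^sub>R \<eta> m)"
    using sum.reindex[OF inj, of "\<lambda>v. u v *\<^sub>R v"] by simp
  finally show ?thesis by (intro exI[of _ "\<lambda>m. u (\<eta> m)"])
qed

text \<open>With \<open>\<mu>\<^sub>m\<^sub>n = \<alpha>\<^sub>m\<beta>\<^sub>n - \<alpha>\<^sub>n\<beta>\<^sub>m\<close> the Pluecker coordinates of \<open>a \<wedge> b\<close>, the six
  components of \<open>a \<wedge> b \<wedge> \<psi>\<^sup>+\<close> and the single component of \<open>a \<wedge> b \<wedge> \<omega>\<^sup>2\<close> are, up to the
  factor \<open>vol\<close>, seven linear forms in \<open>\<mu>\<close> whose squares add up to \<open>\<Sum> \<mu>\<^sub>m\<^sub>n\<^sup>2\<close>; this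
  identity holds because \<open>\<mu>\<close> satisfies the Pluecker relations.\<close>

lemma pluecker_coords_vanish:
  fixes \<alpha> \<beta> :: "nat \<Rightarrow> real"
  assumes a: "a = (\<Sum>m\<in>{1..6}. \<alpha> m *\<^sub>R \<eta> m)" and b: "b = (\<Sum>m\<in>{1..6}. \<beta> m *\<^sub>R \<eta> m)"
    and psi: "wedge (wedge a b) (std_psi_plus \<eta>) = 0"
    and omega: "wedge (wedge a b) (wedge (std_omega \<eta>) (std_omega \<eta>)) = 0"
    and mn: "m \<in> {1..6}" "n \<in> {1..6}"
  shows "\<alpha> m * \<beta> n = \<alpha> n * \<beta> m"
proof -
  define \<mu> where "\<mu> m n = \<alpha> m * \<beta> n - \<alpha> n * \<beta> m" for m n
  obtain K0 where K0: "vol $ K0 \<noteq> 0" using vol_nonzero by (auto simp: vec_eq_iff)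
  define v where "v = vol $ K0"
  \<comment> \<open>stated with \<open>Suc 0\<close>, the simplifier's normal form of the index \<open>1\<close>\<close>
  have v: "wedge (\<eta> (Suc 0)) (wedge (\<eta> 2) (wedge (\<eta> 3) (wedge (\<eta> 4) (wedge (\<eta> 5) (\<eta> 6))))) $ K0 = v"
    by (simp add: v_def vol_def eta_monomial_def)
  note expand = a b sum_atLeastAtMost_1_6 \<mu>_def std_psi_plus_def std_omega_def
  have psi_j: "wedge (wedge (wedge a b) (std_psi_plus \<eta>)) (\<eta> j) $ K0 = 0" for j
    using psi by simp
  from psi_j[of 1] have "(\<mu> 3 6 + \<mu> 4 5) * v = 0" unfolding expand by (simp add: eta_normalize v) algebra
  moreover from psi_j[of 2] have "(\<mu> 3 5 - \<mu> 4 6) * v = 0" unfolding expand by (simp add: eta_normalize v) algebra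
  moreover from psi_j[of 3] have "(\<mu> 1 6 + \<mu> 2 5) * v = 0" unfolding expand by (simp add: eta_normalize v) algebra
  moreover from psi_j[of 4] have "(\<mu> 1 5 - \<mu> 2 6) * v = 0" unfolding expand by (simp add: eta_normalize v) algebra
  moreover from psi_j[of 5] have "(\<mu> 1 4 + \<mu> 2 3) * v = 0" unfolding expand by (simp add: eta_normalize v) algebra
  moreover from psi_j[of 6] have "(\<mu> 1 3 - \<mu> 2 4) * v = 0" unfolding expand by (simp add: eta_normalize v) algebra
  moreover have "wedge (wedge a b) (wedge (std_omega \<eta>) (std_omega \<eta>)) $ K0 = 0" using omega by simp
  then have "(\<mu> 1 2 + \<mu> 3 4 + \<mu> 5 6) * v = 0" unfolding expand by (simp add: eta_normalize v) algebra
  moreover have "(\<mu> 1 2)\<^sup>2 + (\<mu> 1 3)\<^sup>2 + (\<mu> 1 4)\<^sup>2 + (\<mu> 1 5)\<^sup>2 + (\<mu> 1 6)\<^sup>2 + (\<mu> 2 3)\<^sup>2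
      + (\<mu> 2 4)\<^sup>2 + (\<mu> 2 5)\<^sup>2 + (\<mu> 2 6)\<^sup>2 + (\<mu> 3 4)\<^sup>2 + (\<mu> 3 5)\<^sup>2 + (\<mu> 3 6)\<^sup>2 + (\<mu> 4 5)\<^sup>2
      + (\<mu> 4 6)\<^sup>2 + (\<mu> 5 6)\<^sup>2
    = (\<mu> 3 6 + \<mu> 4 5)\<^sup>2 + (\<mu> 3 5 - \<mu> 4 6)\<^sup>2 + (\<mu> 1 6 + \<mu> 2 5)\<^sup>2 + (\<mu> 1 5 - \<mu> 2 6)\<^sup>2
      + (\<mu> 1 4 + \<mu> 2 3)\<^sup>2 + (\<mu> 1 3 - \<mu> 2 4)\<^sup>2 + (\<mu> 1 2 + \<mu> 3 4 + \<mu> 5 6)\<^sup>2"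
    unfolding \<mu>_def by (simp add: power2_eq_square algebra_simps)
  ultimately have "\<mu> 1 2 = 0 \<and> \<mu> 1 3 = 0 \<and> \<mu> 1 4 = 0 \<and> \<mu> 1 5 = 0 \<and> \<mu> 1 6 = 0 \<and> \<mu> 2 3 = 0
      \<and> \<mu> 2 4 = 0 \<and> \<mu> 2 5 = 0 \<and> \<mu> 2 6 = 0 \<and> \<mu> 3 4 = 0 \<and> \<mu> 3 5 = 0 \<and> \<mu> 3 6 = 0
      \<and> \<mu> 4 5 = 0 \<and> \<mu> 4 6 = 0 \<and> \<mu> 5 6 = 0"
    using K0 by (simp add: v_def add_nonneg_eq_0_iff)
  moreover have "m \<in> {1, 2, 3, 4, 5, 6}" "n \<in> {1, 2, 3, 4, 5, 6}" using mn by auto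
  ultimately have "\<mu> m n = 0" unfolding \<mu>_def by (auto simp: algebra_simps)
  then show ?thesis by (simp add: \<mu>_def)
qed

lemma decomposable_annihilator_parallel:
  assumes a: "a \<in> forms_deg 1" "a \<noteq> 0" and b: "b \<in> forms_deg 1"
    and psi: "wedge (wedge a b) (std_psi_plus \<eta>) = 0"
    and omega: "wedge (wedge a b) (wedge (std_omega \<eta>) (std_omega \<eta>)) = 0"
  shows "b \<in> span {a}"
proof -
  obtain \<alpha> where \<alpha>: "a = (\<Sum>m\<in>{1..6}. \<alpha> m *\<^sub>R \<eta> m)" using coords_exist[OF a(1)] by blast
  obtain \<beta> where \<beta>: "b = (\<Sum>m\<in>{1..6}. \<beta> m *\<^sub>R \<eta> m)" using coords_exist[OF b] by blast
  have "\<exists>m\<in>{1..6}. \<alpha> m \<noteq> 0"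
  proof (rule ccontr)
    assume "\<not> (\<exists>m\<in>{1..6}. \<alpha> m \<noteq> 0)"
    then have "a = 0" unfolding \<alpha> by simp
    with a(2) show False ..
  qed
  then obtain m where m: "m \<in> {1..6}" "\<alpha> m \<noteq> 0" by blast
  have "\<beta> n = (\<beta> m / \<alpha> m) * \<alpha> n" if "n \<in> {1..6}" for n
    using pluecker_coords_vanish[OF \<alpha> \<beta> psi omega m(1) that] m(2) by (simp add: field_simps)
  then have "b = (\<beta> m / \<alpha> m) *\<^sub>R a" unfolding \<alpha> \<beta> by (simp add: scaleR_sum_right)
  then show ?thesis by (simp add: span_mul span_base)
qed

lemma std_omega_deg: "std_omega \<eta> \<in> forms_deg 2"
proof -
  have "wedge (\<eta> i) (\<eta> j) \<in> forms_deg 2" if "i \<in> {1..6}" "j \<in> {1..6}" for i j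
    using wedge_deg[OF deg1 deg1, of i j] that by (simp add: numeral_2_eq_2)
  then show ?thesis
    unfolding std_omega_def by (intro subspace_add[OF subspace_forms_deg]) auto
qed

lemma std_psi_plus_deg: "std_psi_plus \<eta> \<in> forms_deg 3"
proof -
  have "wedgel [\<eta> i, \<eta> j, \<eta> k] \<in> forms_deg 3" if "i \<in> {1..6}" "j \<in> {1..6}" "k \<in> {1..6}" for i j k
    using wedgel_deg[of "[\<eta> i, \<eta> j, \<eta> k]"] deg1 that by (auto simp: numeral_3_eq_3)
  then show ?thesis
    unfolding std_psi_plus_def by (intro subspace_diff[OF subspace_forms_deg]) auto
qed

end

lemma half_flat_obtain_coframe:
  assumes "half_flat c \<omega> \<psi>"
  obtains \<eta> where "coframe \<eta>" "\<omega> = std_omega \<eta>" "\<psi> = std_psi_plus \<eta>"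
  using assms unfolding half_flat_def SU3_structure_def std_omega_def std_psi_plus_def coframe_def
  by blast

lemma wedge_self_closed_deg2:
  assumes "\<omega> \<in> forms_deg 2" "wedge (CE_d c \<omega>) \<omega> = 0"
  shows "wedge \<omega> \<omega> \<in> closed_forms c 4"
  using assms wedge_deg[OF assms(1) assms(1)] CE_d_wedge_self_deg2[OF assms(1)]
  by (simp add: closed_forms_def)

theorem theorem2:
  fixes c :: "6 \<Rightarrow> 6 \<Rightarrow> 6 \<Rightarrow> real" and V1 V2 :: "form set"
  assumes "lie_algebra c"
    and "coherent_splitting c V1 V2"
    and "hdim c V1 V2 0 4 = 0"
    and "hdim c V1 V2 0 3 = 0"
  shows "\<not> (\<exists>\<omega> \<psi>. half_flat c \<omega> \<psi>)"
proof
  assume "\<exists>\<omega> \<psi>. half_flat c \<omega> \<psi>"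
  then obtain \<omega> \<psi> \<eta> where hf: "half_flat c \<omega> \<psi>" and "coframe \<eta>"
    and \<omega>: "\<omega> = std_omega \<eta>" and \<psi>: "\<psi> = std_psi_plus \<eta>"
    by (metis half_flat_obtain_coframe)
  interpret coframe \<eta> by fact
  have "\<psi> \<in> closed_forms c 3"
    using hf std_psi_plus_deg by (simp add: \<psi> half_flat_def closed_forms_def)
  then have \<psi>_F1: "\<psi> \<in> Filt V1 V2 3 1" using closed_forms_subset_Filt1[OF assms(2,4)] by auto
  have "wedge \<omega> \<omega> \<in> closed_forms c 4"
    using hf std_omega_deg by (intro wedge_self_closed_deg2) (simp_all add: \<omega> half_flat_def)
  then have \<omega>\<omega>_F1: "wedge \<omega> \<omega> \<in> Filt V1 V2 4 1" using closed_forms_subset_Filt1[OF assms(2,3)] by auto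
  obtain a b where ab: "a \<in> V1" "b \<in> V1" "a \<noteq> b" "independent {a, b}" "V1 \<subseteq> span {a, b}"
    using coherent_splitting_obtain_V1_basis[OF assms(2)] .
  then have ab1: "a \<in> forms_deg 1" "b \<in> forms_deg 1"
    using assms(2) by (auto simp: coherent_splitting_def)
  have "b \<in> span {a}"
    using ab(4) ab1 \<psi>_F1 \<omega>\<omega>_F1
    by (intro decomposable_annihilator_parallel wedge_V1_basis_Filt1_eq_0[OF ab1 ab(5)])
      (auto simp: \<omega> \<psi> dependent_zero)
  then show False using ab(3,4) by (auto simp: dependent_def insert_Diff_if)
qed

end
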